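(* Let $n\ge2$ and let $F:\mathbf{R}^n\to\mathbf{R}$ be an integrand. Then $\mathcal{D}(F)(v)=\|v\|_F$ for every $v\in\mathbf{R}^n$.
   Context: $\mathbb{S}^{n-1}$ is the unit sphere. An integrand is a lower semicontinuous $F:\mathbf{R}^n\to\mathbf{R}$ with $F(\lambda x)=\lambda F(x)$ for $\lambda\ge0$ and $F>0$ on $\mathbb{S}^{n-1}$. $K_F:=\bigcap_{v\in\mathbb{S}^{n-1}}\{z:\langle z,v\rangle\le F(v)\}$; $\mathfrak{P}\Omega:=\{z:\langle z,x\rangle\le1\ \forall x\in\Omega\}$; $\|z\|_F:=\min\{\lambda\ge0: z\in\lambda\,\mathfrak{P}K_F\}$. $\mathcal{W}(F)(v):=\inf_{w\in\mathbb{S}^{n-1},\langle v,w\rangle>0}F(w)/\langle v,w\rangle$, $\mathcal{A}(G)(v):=\sup_{w\in\mathbb{S}^{n-1}}G(w)\langle v,w\rangle$ for $v\in\mathbb{S}^{n-1}$, extended by 1-homogeneity; $\mathcal{D}(F):=\mathcal{A}(\mathcal{W}(F))$. *)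

theory Defs
  imports "HOL-Analysis.Analysis"
begin

definition lower_semicont :: "('a::topological_space \<Rightarrow> real) \<Rightarrow> bool" where
  "lower_semicont F \<longleftrightarrow> (\<forall>x t. t < F x \<longrightarrow> (\<forall>\<^sub>F y in at x. t < F y))"

definition integrand :: "('a::euclidean_space \<Rightarrow> real) \<Rightarrow> bool" where
  "integrand F \<longleftrightarrow> lower_semicont F
     \<and> (\<forall>x. \<forall>l\<ge>0. F (l *\<^sub>R x) = l * F x)
     \<and> (\<forall>v\<in>sphere 0 1. F v > 0)"

definition wulff_K :: "('a::euclidean_space \<Rightarrow> real) \<Rightarrow> 'a set" where
  "wulff_K F = (\<Inter>v\<in>sphere 0 1. {z. inner z v \<le> F v})"

definition polar_set :: "'a::euclidean_space set \<Rightarrow> 'a set" where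
  "polar_set \<Omega> = {z. \<forall>x\<in>\<Omega>. inner z x \<le> 1}"

definition F_norm :: "('a::euclidean_space \<Rightarrow> real) \<Rightarrow> 'a \<Rightarrow> real" where
  "F_norm F z = Inf {l. l \<ge> 0 \<and> z \<in> (\<lambda>y. l *\<^sub>R y) ` polar_set (wulff_K F)}"

definition hom_ext :: "('a::euclidean_space \<Rightarrow> real) \<Rightarrow> 'a \<Rightarrow> real" where
  "hom_ext f v = (if v = 0 then 0 else norm v * f (v /\<^sub>R norm v))"

definition W_op :: "('a::euclidean_space \<Rightarrow> real) \<Rightarrow> 'a \<Rightarrow> real" where
  "W_op F = hom_ext (\<lambda>v. INF w\<in>{w\<in>sphere 0 1. inner v w > 0}. F w / inner v w)"

definition A_op :: "('a::euclidean_space \<Rightarrow> real) \<Rightarrow> 'a \<Rightarrow> real" where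
  "A_op G = hom_ext (\<lambda>v. SUP w\<in>sphere 0 1. G w * inner v w)"

definition D_op :: "('a::euclidean_space \<Rightarrow> real) \<Rightarrow> 'a \<Rightarrow> real" where
  "D_op F = A_op (W_op F)"

end

theory Submission
  imports Defs
begin

text \<open>
  Both sides are the support function \<open>h\<^sub>K(v) = sup\<^sub>z\<^sub>\<in>\<^sub>K \<langle>v, z\<rangle>\<close> of the
  Wulff shape \<open>K = K\<^sub>F\<close>. On the sphere, \<open>\<W>(F)\<close> is the radial function of \<open>K\<close>:
  \<open>\<W>(F)(w) w \<in> K\<close>, and every \<open>z \<in> K\<close> satisfies \<open>|z| \<le> \<W>(F)(z/|z|)\<close>; hence
  \<open>\<A>(\<W>(F))(v) = sup\<^sub>w \<W>(F)(w) \<langle>v, w\<rangle> = h\<^sub>K(v)\<close>. On the other side, for \<open>l > 0\<close>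
  we have \<open>v \<in> l \<P>K\<close> iff \<open>\<langle>v, z\<rangle> \<le> l\<close> on \<open>K\<close>, so the gauge of the polar body
  \<open>\<P>K\<close> is \<open>h\<^sub>K\<close> as well.
\<close>

lemma cSUP_mult_left:
  fixes f :: "'b \<Rightarrow> real"
  assumes "0 \<le> c" "I \<noteq> {}" "bdd_above (f ` I)"
  shows "(SUP i\<in>I. c * f i) = c * (SUP i\<in>I. f i)"
proof -
  have "c * Sup (f ` I) = Sup ((*) c ` f ` I)"
    using assms
    by (intro continuous_at_Sup_mono) (auto intro: mult_left_mono continuous_intros simp: mono_def)
  then show ?thesis by (simp add: image_image)
qed

lemma mem_scaled_polar_set_iff:
  assumes "0 < l"
  shows "v \<in> (\<lambda>y. l *\<^sub>R y) ` polar_set K \<longleftrightarrow> (\<forall>z\<in>K. inner v z \<le> l)"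
proof
  assume "v \<in> (\<lambda>y. l *\<^sub>R y) ` polar_set K"
  then show "\<forall>z\<in>K. inner v z \<le> l"
    using assms by (auto simp: polar_set_def mult_left_le)
next
  assume "\<forall>z\<in>K. inner v z \<le> l"
  then have "v /\<^sub>R l \<in> polar_set K"
    using assms by (simp add: polar_set_def field_simps)
  moreover have "v = l *\<^sub>R (v /\<^sub>R l)"
    using assms by simp
  ultimately show "v \<in> (\<lambda>y. l *\<^sub>R y) ` polar_set K"
    by blast
qed

lemma polar_gauge_eq_support:
  assumes "0 \<in> K" and bdd: "bdd_above ((\<lambda>z. inner v z) ` K)"
  defines "s \<equiv> SUP z\<in>K. inner v z"
  shows "Inf {l. l \<ge> 0 \<and> v \<in> (\<lambda>y. l *\<^sub>R y) ` polar_set K} = s" (is "Inf ?L = s")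
proof (rule cInf_eq_non_empty)
  have le_s: "inner v z \<le> s" if "z \<in> K" for z
    unfolding s_def using that bdd by (rule cSUP_upper)
  then have "0 \<le> s" using \<open>0 \<in> K\<close> by fastforce
  have in_L: "l \<in> ?L" if "s < l" for l
  proof -
    have "\<forall>z\<in>K. inner v z \<le> l" using le_s that by (meson less_imp_le order_trans)
    with that \<open>0 \<le> s\<close> show ?thesis by (simp add: mem_scaled_polar_set_iff)
  qed
  have "s + 1 \<in> ?L" by (intro in_L) simp
  then show "?L \<noteq> {}" by blast
  show "s \<le> l" if "l \<in> ?L" for l
  proof (cases "l = 0")
    case True
    with that have "v = 0" by auto
    moreover have "K \<noteq> {}" using \<open>0 \<in> K\<close> by blast
    ultimately show ?thesis using True by (simp add: s_def)
  next
    case False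
    with that have "0 < l" by simp
    with that have "\<forall>z\<in>K. inner v z \<le> l" by (simp add: mem_scaled_polar_set_iff)
    with \<open>0 \<in> K\<close> show ?thesis unfolding s_def by (intro cSUP_least) auto
  qed
  show "y \<le> s" if "\<And>l. l \<in> ?L \<Longrightarrow> y \<le> l" for y
  proof (rule field_le_epsilon)
    fix e :: real
    assume "0 < e"
    then show "y \<le> s + e" by (intro that in_L) simp
  qed
qed

lemma bounded_wulff_K: "bounded (wulff_K F)"
proof -
  have "norm z \<le> (\<Sum>i\<in>Basis. max (F i) (F (- i)))" if "z \<in> wulff_K F" for z
  proof -
    have "norm z \<le> (\<Sum>i\<in>Basis. \<bar>inner z i\<bar>)" by (rule norm_le_l1)
    also have "\<dots> \<le> (\<Sum>i\<in>Basis. max (F i) (F (- i)))"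
    proof (rule sum_mono)
      fix i :: 'a
      assume "i \<in> Basis"
      then have "i \<in> sphere 0 1" "- i \<in> sphere 0 1" by auto
      then have "inner z i \<le> F i" "inner z (- i) \<le> F (- i)"
        using that unfolding wulff_K_def by blast+
      then show "\<bar>inner z i\<bar> \<le> max (F i) (F (- i))" by auto
    qed
    finally show ?thesis .
  qed
  then show ?thesis unfolding bounded_iff by blast
qed

lemma bdd_above_inner_wulff_K: "bdd_above ((\<lambda>z. inner v z) ` wulff_K F)"
proof -
  have "(\<lambda>z. inner v z) = (\<lambda>z. inner z v)" by (rule ext) (rule inner_commute)
  then show ?thesis using bounded_inner_imp_bdd_above[OF bounded_wulff_K] by metis
qed

lemma zero_mem_wulff_K:
  assumes "\<forall>w\<in>sphere 0 1. 0 \<le> F w"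
  shows "0 \<in> wulff_K F"
  using assms by (simp add: wulff_K_def)

lemma W_op_sphere:
  assumes "w \<in> sphere 0 1"
  shows "W_op F w = (INF w'\<in>{w'\<in>sphere 0 1. 0 < inner w w'}. F w' / inner w w')"
  using assms by (auto simp: W_op_def hom_ext_def)

lemma sgn_mem_open_hemisphere:
  assumes "v \<noteq> 0"
  shows "sgn v \<in> {w\<in>sphere 0 1. 0 < inner (sgn v) w}"
proof -
  have "norm (sgn v) = 1" using assms by (simp add: norm_sgn)
  then show ?thesis using norm_eq_1 by auto
qed

lemma W_op_nonneg:
  assumes "\<forall>w\<in>sphere 0 1. 0 \<le> F w"
  shows "0 \<le> W_op F v"
proof (cases "v = 0")
  case False
  have "0 \<le> (INF w\<in>{w\<in>sphere 0 1. 0 < inner (sgn v) w}. F w / inner (sgn v) w)"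
    using sgn_mem_open_hemisphere[OF False] assms by (intro cINF_greatest) auto
  then show ?thesis
    using False by (simp add: W_op_def hom_ext_def sgn_div_norm)
qed (simp add: W_op_def hom_ext_def)

lemma W_op_le:
  assumes "\<forall>w\<in>sphere 0 1. 0 \<le> F w" "w \<in> sphere 0 1" "w' \<in> sphere 0 1" "0 < inner w w'"
  shows "W_op F w \<le> F w' / inner w w'"
  unfolding W_op_sphere[OF assms(2)] using assms
  by (intro cINF_lower bdd_belowI2[of _ 0]) auto

lemma W_op_scaleR_mem_wulff_K:
  assumes nonneg: "\<forall>w\<in>sphere 0 1. 0 \<le> F w" and w: "w \<in> sphere 0 1"
  shows "W_op F w *\<^sub>R w \<in> wulff_K F"
  unfolding wulff_K_def
proof (intro InterI, clarsimp)
  fix v :: 'a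
  assume v: "norm v = 1"
  show "W_op F w * inner w v \<le> F v"
  proof (cases "0 < inner w v")
    case True
    then show ?thesis
      using W_op_le[OF nonneg w, of v] v by (simp add: le_divide_eq)
  next
    case False
    then have "W_op F w * inner w v \<le> 0"
      using W_op_nonneg[OF nonneg] by (simp add: mult_nonneg_nonpos)
    also have "0 \<le> F v" using nonneg v by simp
    finally show ?thesis .
  qed
qed

lemma norm_le_W_op_sgn:
  assumes "z \<in> wulff_K F"
  shows "norm z \<le> W_op F (sgn z)"
proof (cases "z = 0")
  case False
  have "norm z \<le> F w' / inner (sgn z) w'"
    if "w' \<in> sphere 0 1" "0 < inner (sgn z) w'" for w'
  proof -
    have "norm z * inner (sgn z) w' = inner z w'"
      by (simp add: sgn_div_norm False)
    also have "\<dots> \<le> F w'" using assms that by (auto simp: wulff_K_def)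
    finally show ?thesis using that by (simp add: le_divide_eq)
  qed
  moreover have "sgn z \<in> sphere 0 1" using False by (simp add: norm_sgn)
  ultimately show ?thesis
    unfolding W_op_sphere[OF \<open>sgn z \<in> sphere 0 1\<close>]
    using sgn_mem_open_hemisphere[OF False] by (intro cINF_greatest) auto
qed (simp add: W_op_def hom_ext_def)

lemma exists_sphere_inner_nonneg: "\<exists>w\<in>sphere (0::'a::euclidean_space) 1. 0 \<le> inner v w"
proof -
  obtain b :: 'a where "b \<in> Basis" using nonempty_Basis by blast
  then have "b \<in> sphere 0 1" "- b \<in> sphere 0 1" by auto
  then show ?thesis by (metis inner_minus_right neg_0_le_iff_le nle_le)
qed

lemma SUP_W_op_eq_support:
  assumes nonneg: "\<forall>w\<in>sphere 0 1. 0 \<le> F w"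
  shows "(SUP w\<in>sphere 0 1. W_op F w * inner v w) = (SUP z\<in>wulff_K F. inner v z)"
proof (rule antisym)
  have le_support: "W_op F w * inner v w \<le> (SUP z\<in>wulff_K F. inner v z)"
    if "w \<in> sphere 0 1" for w
  proof -
    have "W_op F w * inner v w = inner v (W_op F w *\<^sub>R w)" by simp
    also have "\<dots> \<le> (SUP z\<in>wulff_K F. inner v z)"
      using W_op_scaleR_mem_wulff_K[OF nonneg that] bdd_above_inner_wulff_K by (rule cSUP_upper)
    finally show ?thesis .
  qed
  then show "(SUP w\<in>sphere 0 1. W_op F w * inner v w) \<le> (SUP z\<in>wulff_K F. inner v z)"
    by (intro cSUP_least) auto
  have bdd: "bdd_above ((\<lambda>w. W_op F w * inner v w) ` sphere 0 1)"
    using le_support by (intro bdd_aboveI2)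
  obtain w0 where w0: "w0 \<in> sphere 0 1" "0 \<le> inner v w0"
    using exists_sphere_inner_nonneg by blast
  have SUP_nonneg: "0 \<le> (SUP w\<in>sphere 0 1. W_op F w * inner v w)"
    using W_op_nonneg[OF nonneg, of w0] w0 by (intro cSUP_upper2[OF bdd w0(1)]) simp
  show "(SUP z\<in>wulff_K F. inner v z) \<le> (SUP w\<in>sphere 0 1. W_op F w * inner v w)"
  proof (rule cSUP_least)
    show "wulff_K F \<noteq> {}" using zero_mem_wulff_K[OF nonneg] by blast
  next
    fix z
    assume z: "z \<in> wulff_K F"
    show "inner v z \<le> (SUP w\<in>sphere 0 1. W_op F w * inner v w)"
    proof (cases "0 < inner v z")
      case True
      then have "z \<noteq> 0" by auto
      have z_eq: "inner v z = norm z * inner v (sgn z)"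
        using \<open>z \<noteq> 0\<close> by (simp add: sgn_div_norm)
      with True have "0 \<le> inner v (sgn z)"
        by (simp add: zero_less_mult_iff)
      with z_eq have "inner v z \<le> W_op F (sgn z) * inner v (sgn z)"
        using norm_le_W_op_sgn[OF z] by (simp add: mult_right_mono)
      also have "\<dots> \<le> (SUP w\<in>sphere 0 1. W_op F w * inner v w)"
        using bdd \<open>z \<noteq> 0\<close> by (intro cSUP_upper) (simp_all add: norm_sgn)
      finally show ?thesis .
    next
      case False
      with SUP_nonneg show ?thesis by linarith
    qed
  qed
qed

lemma D_op_eq_support:
  assumes nonneg: "\<forall>w\<in>sphere 0 1. 0 \<le> F w"
  shows "D_op F v = (SUP z\<in>wulff_K F. inner v z)"
proof -
  have K_ne: "wulff_K F \<noteq> {}" using zero_mem_wulff_K[OF nonneg] by blast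
  show ?thesis
  proof (cases "v = 0")
    case True
    with K_ne show ?thesis by (simp add: D_op_def A_op_def hom_ext_def)
  next
    case False
    have "D_op F v = norm v * (SUP w\<in>sphere 0 1. W_op F w * inner (sgn v) w)"
      using False by (simp add: D_op_def A_op_def hom_ext_def sgn_div_norm)
    also have "\<dots> = norm v * (SUP z\<in>wulff_K F. inner (sgn v) z)"
      by (simp add: SUP_W_op_eq_support[OF nonneg])
    also have "\<dots> = (SUP z\<in>wulff_K F. norm v * inner (sgn v) z)"
      by (rule cSUP_mult_left[symmetric]) (simp_all add: K_ne bdd_above_inner_wulff_K)
    also have "\<dots> = (SUP z\<in>wulff_K F. inner v z)"
      using False by (simp add: sgn_div_norm field_simps)
    finally show ?thesis .
  qed
qed

lemma F_norm_eq_support: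
  assumes "\<forall>w\<in>sphere 0 1. 0 \<le> F w"
  shows "F_norm F v = (SUP z\<in>wulff_K F. inner v z)"
  unfolding F_norm_def using zero_mem_wulff_K[OF assms] bdd_above_inner_wulff_K
  by (rule polar_gauge_eq_support)

theorem corollary3p2:
  fixes F :: "'a::euclidean_space \<Rightarrow> real"
  assumes "DIM('a) \<ge> 2"
    and "integrand F"
  shows "\<forall>v. D_op F v = F_norm F v"
proof
  fix v :: 'a
  have "\<forall>w\<in>sphere 0 1. 0 \<le> F w"
    using assms(2) by (auto simp: integrand_def less_imp_le)
  then show "D_op F v = F_norm F v"
    by (simp add: D_op_eq_support F_norm_eq_support)
qed

end
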